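(* Let $(X,p)$ and $(Y,d)$ be complete separable metric spaces and let $F: X \Rightarrow Y$ be a multi-valued function whose graph is an analytic subset of $X \times Y$. Then the set of points of strong continuity of $F$ is a co-analytic subset of $X$.
   Context: A multi-valued function $F: X \Rightarrow Y$ assigns to each $x$ a nonempty set $F(x)\subseteq Y$; its graph is $\{(x,y): y\in F(x)\}$. $F$ is strongly continuous at $x$ if for every $y \in F(x)$ and every $\varepsilon>0$ there is $\delta>0$ such that for every $x' \in B_p(x,\delta)$ there is $y' \in F(x')$ with $d(y,y')<\varepsilon$. A subset of a complete separable metric space is analytic if it is a continuous image of a closed subset of a complete separable metric space, and co-analytic if its complement is analytic. *)

theory Defs
  imports "HOL-Analysis.Analysis"
begin

text \<open>Analytic set: a continuous image of a closed subset of a complete separable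
  metric space. Every complete separable metric space is homeomorphic to a closed
  subset of the Polish space nat => real (product topology), so it suffices to take
  closed subsets of that fixed Polish space as domains.\<close>
definition analytic_set :: "'a::topological_space set \<Rightarrow> bool" where
  "analytic_set A \<longleftrightarrow>
     (\<exists>(C :: (nat \<Rightarrow> real) set) f. closed C \<and> continuous_on C f \<and> f ` C = A)"

definition coanalytic_set :: "'a::topological_space set \<Rightarrow> bool" where
  "coanalytic_set A \<longleftrightarrow> analytic_set (- A)"

definition graph_mv :: "('a \<Rightarrow> 'b set) \<Rightarrow> ('a \<times> 'b) set" where
  "graph_mv F = {(x, y). y \<in> F x}"

definition strongly_continuous_at :: "('a::metric_space \<Rightarrow> 'b::metric_space set) \<Rightarrow> 'a \<Rightarrow> bool" where
  "strongly_continuous_at F x \<longleftrightarrow>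
     (\<forall>y \<in> F x. \<forall>\<epsilon>>0. \<exists>\<delta>>0. \<forall>x' \<in> ball x \<delta>. \<exists>y' \<in> F x'. dist y y' < \<epsilon>)"

end

theory Submission imports Defs begin

text \<open>If \<open>F\<close> is not strongly continuous at \<open>x\<close>, witnessed by \<open>y \<in> F x\<close> and \<open>\<epsilon>\<close>, choose
  \<open>r = 1/(n+1)\<close> with \<open>4r < \<epsilon>\<close> and a point \<open>d\<close> of a countable dense set with \<open>d(d,y) < r\<close>: then
  \<open>x\<close> is a limit of points \<open>x'\<close> with \<open>F x' \<inter> B(d,3r) = {}\<close>. Conversely such \<open>x\<close>, \<open>y\<close>, \<open>d\<close>,
  \<open>r\<close> witness a failure of strong continuity with \<open>\<epsilon> = r\<close>. So the set of points of strong
  discontinuity is the countable union over \<open>d\<close> and \<open>n\<close> of the first projections of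
  \<open>graph F \<inter> (closure {x'. F x' \<inter> B(d,3r) = {}} \<times> cball d r)\<close>. These are analytic, as analytic
  sets are stable under intersection with closed sets and under continuous images, and analytic
  sets are stable under countable unions.\<close>

lemma analytic_set_Int_closed:
  assumes "analytic_set S" "closed K"
  shows "analytic_set (S \<inter> K)"
proof -
  obtain C :: "(nat \<Rightarrow> real) set" and f where f: "closed C" "continuous_on C f" "f ` C = S"
    using assms(1) unfolding analytic_set_def by blast
  have "closed (C \<inter> f -` K)"
    using continuous_closed_preimage[OF f(2,1) assms(2)] .
  moreover have "continuous_on (C \<inter> f -` K) f"
    using continuous_on_subset[OF f(2)] by blast
  moreover have "f ` (C \<inter> f -` K) = S \<inter> K"
    using f(3) by blast
  ultimately show ?thesis
    unfolding analytic_set_def by blast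
qed

lemma analytic_set_continuous_image:
  assumes "analytic_set A" "continuous_on A g"
  shows "analytic_set (g ` A)"
proof -
  obtain C :: "(nat \<Rightarrow> real) set" and f where f: "closed C" "continuous_on C f" "f ` C = A"
    using assms(1) unfolding analytic_set_def by blast
  have "continuous_on C (g \<circ> f)"
    using continuous_on_compose[OF f(2)] assms(2) f(3) by simp
  moreover have "(g \<circ> f) ` C = g ` A"
    using f(3) image_comp[of g f C] by simp
  ultimately show ?thesis
    unfolding analytic_set_def using f(1) by blast
qed

text \<open>The countable union of the images \<open>f n ` C n\<close> is the image of the disjoint sum of the \<open>C n\<close>,
  coded inside \<open>nat \<Rightarrow> real\<close> by storing the index \<open>n\<close> in coordinate \<open>0\<close>.\<close>

definition tagged_union :: "(nat \<Rightarrow> (nat \<Rightarrow> real) set) \<Rightarrow> (nat \<Rightarrow> real) set" where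
  "tagged_union C = {z. \<exists>n. z 0 = real n \<and> (\<lambda>i. z (Suc i)) \<in> C n}"

lemma continuous_on_coordinate: "continuous_on A (\<lambda>x. x i :: 'b::topological_space)"
  by (rule continuous_on_subset[OF continuous_on_product_coordinates]) simp

lemma continuous_on_tail: "continuous_on A (\<lambda>(z :: nat \<Rightarrow> real) i. z (Suc i))"
  by (intro continuous_on_coordinatewise_then_product continuous_on_coordinate)

lemma tagged_union_eq:
  "tagged_union C =
     {z. z 0 \<in> \<nat>} \<inter> (\<Inter>n. {z. 1/2 \<le> \<bar>z 0 - real n\<bar>} \<union> (\<lambda>z i. z (Suc i)) -` C n)"
proof (intro set_eqI iffI)
  fix z assume "z \<in> tagged_union C"
  then obtain m where "z 0 = real m" "(\<lambda>i. z (Suc i)) \<in> C m"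
    unfolding tagged_union_def by blast
  moreover have "1/2 \<le> \<bar>real m - real n\<bar> \<or> n = m" for n
    by linarith
  ultimately show "z \<in> {z. z 0 \<in> \<nat>} \<inter> (\<Inter>n. {z. 1/2 \<le> \<bar>z 0 - real n\<bar>} \<union> (\<lambda>z i. z (Suc i)) -` C n)"
    by auto
next
  fix z assume z: "z \<in> {z. z 0 \<in> \<nat>} \<inter> (\<Inter>n. {z. 1/2 \<le> \<bar>z 0 - real n\<bar>} \<union> (\<lambda>z i. z (Suc i)) -` C n)"
  then obtain m where "z 0 = real m"
    by (auto elim: Nats_cases)
  moreover have "1/2 \<le> \<bar>z 0 - real m\<bar> \<or> (\<lambda>i. z (Suc i)) \<in> C m"
    using z by blast
  ultimately show "z \<in> tagged_union C"
    unfolding tagged_union_def by auto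
qed

lemma closed_tagged_union:
  assumes "\<And>n. closed (C n)"
  shows "closed (tagged_union C)"
proof -
  have "closed {z :: nat \<Rightarrow> real. z 0 \<in> \<nat>}"
    using closed_vimage[OF closed_Nats continuous_on_coordinate] by (simp add: vimage_def)
  moreover have "closed {z :: nat \<Rightarrow> real. 1/2 \<le> \<bar>z 0 - real n\<bar>}" for n
    by (intro closed_Collect_le continuous_intros continuous_on_coordinate)
  moreover have "closed ((\<lambda>z i. z (Suc i)) -` C n)" for n
    using closed_vimage[OF assms continuous_on_tail] .
  ultimately show ?thesis
    unfolding tagged_union_eq by (intro closed_Int closed_INT closed_Un) auto
qed

lemma continuous_on_tagged_union:
  assumes "\<And>n. continuous_on (C n) (f n)"
  shows "continuous_on (tagged_union C) (\<lambda>z. f (nat \<lfloor>z 0\<rfloor>) (\<lambda>i. z (Suc i)))"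
proof -
  define T where "T n = tagged_union C \<inter> (\<lambda>z. z 0) -` {real n - 1/2 <..< real n + 1/2}" for n
  have T_eq: "T n = {z. z 0 = real n \<and> (\<lambda>i. z (Suc i)) \<in> C n}" for n
  proof -
    have "m = n" if "\<bar>real m - real n\<bar> < 1/2" for m
      using that by linarith
    then show ?thesis
      unfolding T_def tagged_union_def by force
  qed
  have T_sub: "tagged_union C \<inter> T n = T n" for n
    unfolding T_def by blast
  have "continuous_map (top_of_set (tagged_union C)) euclidean
      (\<lambda>z. f (nat \<lfloor>z 0\<rfloor>) (\<lambda>i. z (Suc i)))"
  proof (rule pasting_lemma[where I = UNIV and T = T and f = "\<lambda>n z. f n (\<lambda>i. z (Suc i))"])
    show "openin (top_of_set (tagged_union C)) (T n)" for n
      unfolding T_def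
      by (intro openin_open_Int open_vimage open_greaterThanLessThan continuous_on_coordinate)
    have "continuous_on (T n) (\<lambda>z. f n (\<lambda>i. z (Suc i)))" for n
      unfolding T_eq by (rule continuous_on_compose2[OF assms continuous_on_tail]) auto
    then show "continuous_map (subtopology (top_of_set (tagged_union C)) (T n)) euclidean
        (\<lambda>z. f n (\<lambda>i. z (Suc i)))" for n
      by (simp add: subtopology_subtopology T_sub continuous_map_iff_continuous)
    show "f i (\<lambda>k. z (Suc k)) = f j (\<lambda>k. z (Suc k))"
      if "z \<in> topspace (top_of_set (tagged_union C)) \<inter> T i \<inter> T j" for i j z
      using that unfolding T_eq by auto
    show "\<exists>n. n \<in> UNIV \<and> z \<in> T n \<and> f (nat \<lfloor>z 0\<rfloor>) (\<lambda>i. z (Suc i)) = f n (\<lambda>i. z (Suc i))"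
      if "z \<in> topspace (top_of_set (tagged_union C))" for z
      using that unfolding T_eq tagged_union_def by auto
  qed
  then show ?thesis
    by (simp add: continuous_map_iff_continuous)
qed

lemma analytic_set_UN_nat:
  fixes A :: "nat \<Rightarrow> 'a::topological_space set"
  assumes "\<And>n. analytic_set (A n)"
  shows "analytic_set (\<Union>n. A n)"
proof -
  obtain C :: "nat \<Rightarrow> (nat \<Rightarrow> real) set" and f
    where Cf: "\<And>n. closed (C n)" "\<And>n. continuous_on (C n) (f n)" "\<And>n. f n ` C n = A n"
    using assms unfolding analytic_set_def by metis
  define g where "g z = f (nat \<lfloor>z 0\<rfloor>) (\<lambda>i. z (Suc i))" for z
  have "g ` tagged_union C = (\<Union>n. A n)"
  proof (intro set_eqI iffI)
    fix a assume "a \<in> (\<Union>n. A n)"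
    then obtain n c where "c \<in> C n" "a = f n c"
      using Cf(3) by blast
    then have "case_nat (real n) c \<in> tagged_union C" "g (case_nat (real n) c) = a"
      unfolding tagged_union_def g_def by auto
    then show "a \<in> g ` tagged_union C"
      by blast
  qed (force simp: tagged_union_def g_def simp flip: Cf(3))
  then show ?thesis
    unfolding analytic_set_def
    using closed_tagged_union[of C, OF Cf(1)] continuous_on_tagged_union[of C f, OF Cf(2), folded g_def]
    by (intro exI[of _ "tagged_union C"] exI[of _ g] conjI)
qed

lemma analytic_set_UN_countable:
  fixes A :: "'i \<Rightarrow> 'a::topological_space set"
  assumes "countable I" "\<And>i. i \<in> I \<Longrightarrow> analytic_set (A i)"
  shows "analytic_set (\<Union>i\<in>I. A i)"
proof (cases "I = {}")
  case True
  have "analytic_set ({} :: 'a set)"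
    unfolding analytic_set_def by (intro exI[of _ "{}"]) auto
  then show ?thesis
    using True by simp
next
  case False
  have "(\<Union>i\<in>I. A i) = (\<Union>n. A (from_nat_into I n))"
    using range_from_nat_into[OF False assms(1)] by (metis image_image)
  then show ?thesis
    using analytic_set_UN_nat[of "\<lambda>n. A (from_nat_into I n)"] assms from_nat_into[OF False]
    by simp
qed

definition misses_ball :: "('a \<Rightarrow> 'b::metric_space set) \<Rightarrow> 'b \<Rightarrow> real \<Rightarrow> 'a set" where
  "misses_ball F c r = {x. F x \<inter> ball c r = {}}"

lemma not_strongly_continuous_at_if_misses_ball:
  fixes F :: "'a::metric_space \<Rightarrow> 'b::metric_space set"
  assumes "r > 0" "y \<in> F x \<inter> cball d r" "x \<in> closure (misses_ball F d (3 * r))"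
  shows "\<not> strongly_continuous_at F x"
proof
  assume "strongly_continuous_at F x"
  then obtain \<delta> where "\<delta> > 0" and \<delta>: "\<And>x'. x' \<in> ball x \<delta> \<Longrightarrow> \<exists>y'\<in>F x'. dist y y' < r"
    using assms(1,2) unfolding strongly_continuous_at_def by blast
  obtain x' where x': "x' \<in> misses_ball F d (3 * r)" "dist x' x < \<delta>"
    using assms(3) \<open>\<delta> > 0\<close> unfolding closure_approachable by blast
  then obtain y' where "y' \<in> F x'" "dist y y' < r"
    using \<delta>[of x'] by (auto simp: dist_commute)
  moreover have "dist d y' \<le> dist d y + dist y y'"
    by (rule dist_triangle)
  ultimately have "y' \<in> F x' \<inter> ball d (3 * r)"
    using assms(1,2) by auto
  then show False
    using x'(1) unfolding misses_ball_def by blast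
qed

lemma misses_ball_if_not_strongly_continuous_at:
  fixes F :: "'a::metric_space \<Rightarrow> 'b::metric_space set"
  assumes "\<not> strongly_continuous_at F x"
    and dense: "\<And>U. open U \<Longrightarrow> U \<noteq> {} \<Longrightarrow> \<exists>d\<in>D. d \<in> U"
  obtains d n y where "d \<in> D" "y \<in> F x \<inter> cball d (inverse (Suc n))"
    "x \<in> closure (misses_ball F d (3 * inverse (Suc n)))"
proof -
  obtain y \<epsilon> where y: "y \<in> F x" "\<epsilon> > 0"
    and far: "\<And>\<delta>. \<delta> > 0 \<Longrightarrow> \<exists>x'\<in>ball x \<delta>. \<forall>y'\<in>F x'. \<epsilon> \<le> dist y y'"
    using assms(1) unfolding strongly_continuous_at_def by (meson not_less)
  obtain n where n: "inverse (real (Suc n)) < \<epsilon> / 4"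
    using reals_Archimedean[of "\<epsilon> / 4"] y(2) by auto
  define r where "r = inverse (real (Suc n))"
  have "r > 0" "4 * r < \<epsilon>"
    using n unfolding r_def by auto
  obtain d where d: "d \<in> D" "d \<in> ball y r"
    using dense[of "ball y r"] \<open>r > 0\<close> by auto
  have "x \<in> closure (misses_ball F d (3 * r))"
    unfolding closure_approachable
  proof (intro allI impI)
    fix e :: real assume "e > 0"
    then obtain x' where x': "x' \<in> ball x e" "\<And>y'. y' \<in> F x' \<Longrightarrow> \<epsilon> \<le> dist y y'"
      using far by blast
    have "dist d y' \<ge> 3 * r" if "y' \<in> F x'" for y'
      using x'(2)[OF that] dist_triangle[of y y' d] d(2) \<open>4 * r < \<epsilon>\<close> by (simp add: dist_commute)
    then have "x' \<in> misses_ball F d (3 * r)"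
      unfolding misses_ball_def by fastforce
    then show "\<exists>x'\<in>misses_ball F d (3 * r). dist x' x < e"
      using x'(1) by (auto simp: dist_commute)
  qed
  moreover have "y \<in> F x \<inter> cball d r"
    using y(1) d(2) by (simp add: dist_commute)
  ultimately show thesis
    using that d(1) unfolding r_def by blast
qed

definition strong_discontinuity_set :: "('a::topological_space \<Rightarrow> 'b::metric_space set) \<Rightarrow> 'b \<Rightarrow> real \<Rightarrow> 'a set" where
  "strong_discontinuity_set F d r = fst ` (graph_mv F \<inter> closure (misses_ball F d (3 * r)) \<times> cball d r)"

lemma Compl_strongly_continuous_eq_UN_strong_discontinuity_set:
  fixes F :: "'a::metric_space \<Rightarrow> 'b::metric_space set"
  assumes dense: "\<And>U. open U \<Longrightarrow> U \<noteq> {} \<Longrightarrow> \<exists>d\<in>D. d \<in> U"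
  shows "- {x. strongly_continuous_at F x} =
    (\<Union>(d, n)\<in>D \<times> UNIV. strong_discontinuity_set F d (inverse (Suc n)))"
proof (intro set_eqI iffI)
  fix x assume "x \<in> - {x. strongly_continuous_at F x}"
  then have "\<not> strongly_continuous_at F x"
    by simp
  then obtain d n y where "d \<in> D" "y \<in> F x \<inter> cball d (inverse (Suc n))"
    "x \<in> closure (misses_ball F d (3 * inverse (Suc n)))"
    by (rule misses_ball_if_not_strongly_continuous_at[OF _ dense])
  then have "x \<in> strong_discontinuity_set F d (inverse (Suc n))"
    unfolding strong_discontinuity_set_def graph_mv_def by force
  then show "x \<in> (\<Union>(d, n)\<in>D \<times> UNIV. strong_discontinuity_set F d (inverse (Suc n)))"
    using \<open>d \<in> D\<close> by force
next
  fix x assume "x \<in> (\<Union>(d, n)\<in>D \<times> UNIV. strong_discontinuity_set F d (inverse (Suc n)))"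
  then obtain d n y where "y \<in> F x \<inter> cball d (inverse (Suc n))"
    "x \<in> closure (misses_ball F d (3 * inverse (Suc n)))"
    unfolding strong_discontinuity_set_def graph_mv_def by auto
  then show "x \<in> - {x. strongly_continuous_at F x}"
    using not_strongly_continuous_at_if_misses_ball[of "inverse (Suc n)"] by simp
qed

lemma analytic_strong_discontinuity_set:
  assumes "analytic_set (graph_mv F)"
  shows "analytic_set (strong_discontinuity_set F d r)"
  unfolding strong_discontinuity_set_def
  by (intro analytic_set_continuous_image analytic_set_Int_closed assms
      closed_Times closed_closure closed_cball continuous_on_fst continuous_on_id)

theorem proposition3p4:
  fixes F :: "'a::polish_space \<Rightarrow> 'b::polish_space set"
  assumes nonempty: "\<And>x. F x \<noteq> {}"
    and analytic_graph: "analytic_set (graph_mv F)"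
  shows "coanalytic_set {x. strongly_continuous_at F x}"
proof -
  obtain D :: "'b set" where "countable D"
    and D_dense: "\<And>U. open U \<Longrightarrow> U \<noteq> {} \<Longrightarrow> \<exists>d\<in>D. d \<in> U"
    by (rule countable_dense_setE) blast
  have "countable (D \<times> (UNIV :: nat set))"
    using \<open>countable D\<close> by simp
  then have "analytic_set (\<Union>(d, n)\<in>D \<times> UNIV. strong_discontinuity_set F d (inverse (Suc n)))"
    by (intro analytic_set_UN_countable) (auto intro: analytic_strong_discontinuity_set analytic_graph)
  moreover have "- {x. strongly_continuous_at F x} =
      (\<Union>(d, n)\<in>D \<times> UNIV. strong_discontinuity_set F d (inverse (Suc n)))"
    using D_dense by (rule Compl_strongly_continuous_eq_UN_strong_discontinuity_set)
  ultimately show ?thesis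
    unfolding coanalytic_set_def by simp
qed

end
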